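(* Consider the distributed peeling protocol described in the context, run in the synchronous phase model described in the context. Then: (i) for $k$-core mining (threshold $k(v)=k$ for all $v$) on a graph $G=(V,E)$ with $k\le |V|$, the protocol converges in no more than $|V|-k$ phases; (ii) for $(k_1,k_2)$-core mining (threshold $k(v)=k_i$ for $v\in V_i$) on a bipartite graph $G=(V_1,V_2,E)$, it converges in no more than $(|V_1|-k_2)+(|V_2|-k_1)+1$ phases; (iii) for $(k_1,\ldots,k_p)$-core mining (threshold $k(v)=k_i$ for $v\in V_i$) on a $p$-partite graph $G=(V_1,\ldots,V_p,E)$ with $k_i\le |V_i|$ for all $1\le i\le p$, it converges in no more than $\sum_{i=1}^p |V_i| - \min_{1\le i\le p} k_i$ phases.
   Context: All graphs are finite simple undirected. A $p$-partite graph $G=(V_1,\ldots,V_p,E)$ has vertex set partitioned into disjoint sets $V_1,\ldots,V_p$ with no edges inside any $V_i$ (bipartite means $p=2$). Distributed peeling protocol with thresholds $k(v)$: each node $v$ keeps a counter $degree$, initialized to $\deg_G(v)$, and a status, initially active. Initially, if $degree<k(v)$, node $v$ sends an "off" message to each of its neighbors and becomes inactive. An active node, upon receiving a message, sets $degree=degree-1$; if then $degree<k(v)$, it sends an "off" message to each of its neighbors and becomes inactive. An inactive node remains inactive and ignores all incoming messages. Synchronous phase model: nodes operate in synchronized phases; in each phase, every node receives all messages sent by other nodes in the previous phase and, if applicable, sends off-messages to all its neighbors. The protocol converges at the phase after which no further node becomes inactive and no messages are sent. *)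

theory Defs
  imports Main
begin

definition simple_graph :: "'a set \<Rightarrow> ('a \<Rightarrow> 'a \<Rightarrow> bool) \<Rightarrow> bool" where
  "simple_graph V E \<longleftrightarrow> finite V \<and> (\<forall>u v. E u v \<longrightarrow> u \<in> V \<and> v \<in> V)
     \<and> (\<forall>u v. E u v \<longrightarrow> E v u) \<and> (\<forall>v. \<not> E v v)"

definition nbrs :: "'a set \<Rightarrow> ('a \<Rightarrow> 'a \<Rightarrow> bool) \<Rightarrow> 'a \<Rightarrow> 'a set" where
  "nbrs V E v = {u \<in> V. E v u}"

definition gdeg :: "'a set \<Rightarrow> ('a \<Rightarrow> 'a \<Rightarrow> bool) \<Rightarrow> 'a \<Rightarrow> nat" where
  "gdeg V E v = card (nbrs V E v)"

definition p_partite :: "'a set \<Rightarrow> ('a \<Rightarrow> 'a \<Rightarrow> bool) \<Rightarrow> nat \<Rightarrow> (nat \<Rightarrow> 'a set) \<Rightarrow> bool" where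
  "p_partite V E p P \<longleftrightarrow> simple_graph V E
     \<and> (\<Union>i\<in>{1..p}. P i) = V
     \<and> (\<forall>i\<in>{1..p}. \<forall>j\<in>{1..p}. i \<noteq> j \<longrightarrow> P i \<inter> P j = {})
     \<and> (\<forall>i\<in>{1..p}. \<forall>u\<in>P i. \<forall>v\<in>P i. \<not> E u v)"

definition bipartite :: "'a set \<Rightarrow> ('a \<Rightarrow> 'a \<Rightarrow> bool) \<Rightarrow> 'a set \<Rightarrow> 'a set \<Rightarrow> bool" where
  "bipartite V E V1 V2 \<longleftrightarrow> simple_graph V E \<and> V1 \<union> V2 = V \<and> V1 \<inter> V2 = {}
     \<and> (\<forall>u\<in>V1. \<forall>v\<in>V1. \<not> E u v) \<and> (\<forall>u\<in>V2. \<forall>v\<in>V2. \<not> E u v)"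

text \<open>Synchronous peeling: off V E k t is the set of inactive nodes at the end of
  phase t.  Phase 0 is the initial step (nodes with degree < k(v) switch off).
  In phase t+1 every still active node v has received exactly one off-message from
  each neighbour that became inactive in phases 0..t, so its counter equals
  deg v - |N(v) \<inter> off t|; if that is < k v it becomes inactive.\<close>
fun off :: "'a set \<Rightarrow> ('a \<Rightarrow> 'a \<Rightarrow> bool) \<Rightarrow> ('a \<Rightarrow> nat) \<Rightarrow> nat \<Rightarrow> 'a set" where
  "off V E k 0 = {v \<in> V. gdeg V E v < k v}"
| "off V E k (Suc t) = off V E k t \<union>
     {v \<in> V - off V E k t. gdeg V E v - card (nbrs V E v \<inter> off V E k t) < k v}"

text \<open>The protocol has converged by phase T: after phase T no further node becomes
  inactive (hence no further messages are sent).\<close>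
definition converges_within :: "'a set \<Rightarrow> ('a \<Rightarrow> 'a \<Rightarrow> bool) \<Rightarrow> ('a \<Rightarrow> nat) \<Rightarrow> nat \<Rightarrow> bool" where
  "converges_within V E k T \<longleftrightarrow> (\<forall>t\<ge>T. off V E k t = off V E k T)"

end

theory Submission
  imports Defs
begin

text \<open>Let \<open>O\<^sub>n\<close> be the set of nodes that are inactive before phase \<open>n\<close>, and call the
  neighbours of a node outside \<open>O\<^sub>n\<close> its live neighbours. Until the protocol converges
  every phase removes a node, so \<open>n \<le> |O\<^sub>n|\<close>. A node \<open>v\<close> removed in phase \<open>n + 1\<close>
  survived phase \<open>n\<close>, so it had at least \<open>min k\<close> live neighbours; these, \<open>O\<^sub>n\<close> and \<open>v\<close>
  are disjoint, whence \<open>n + 1 + min k \<le> |V|\<close>. This gives (i) and (iii).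

  For (ii) let \<open>v \<in> V\<^sub>1\<close> be removed in phase \<open>n + 2\<close>. It lost a neighbour \<open>u \<in> V\<^sub>2\<close>
  in phase \<open>n + 1\<close>, and some node \<open>w\<close> was removed in phase \<open>n\<close>. Counting the at least
  \<open>k\<^sub>2\<close> live neighbours of \<open>u\<close> in \<open>V\<^sub>1\<close> and the at least \<open>k\<^sub>1\<close> live neighbours of \<open>v\<close> in
  \<open>V\<^sub>2\<close> against \<open>O\<^sub>n\<close> and \<open>w\<close> yields \<open>n + 1 \<le> (|V\<^sub>1| - k\<^sub>2) + (|V\<^sub>2| - k\<^sub>1)\<close>. The count
  only fails to include \<open>w\<close> when \<open>w \<in> V\<^sub>1\<close> and at most \<open>k\<^sub>2\<close> nodes of \<open>V\<^sub>1\<close> are still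
  active; but then every active node of \<open>V\<^sub>2\<close> is adjacent to all of them, in particular
  to \<open>w\<close>, so \<open>w\<close> had at least as many live neighbours as \<open>v\<close> has one phase later,
  and \<open>w\<close> could not have been removed while \<open>v\<close> survived.\<close>

text \<open>\<open>off_before V E k n\<close> is \<open>O\<^sub>n\<close>; shifting \<^const>\<open>off\<close> by one phase makes the recursion
  uniform, starting from \<open>{}\<close>.\<close>

fun off_before :: "'a set \<Rightarrow> ('a \<Rightarrow> 'a \<Rightarrow> bool) \<Rightarrow> ('a \<Rightarrow> nat) \<Rightarrow> nat \<Rightarrow> 'a set" where
  "off_before V E k 0 = {}"
| "off_before V E k (Suc t) = off V E k t"

declare off_before.simps(2)[simp del]

lemma off_subset: "off V E k t \<subseteq> V"
  by (induction t) auto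

lemma simple_graph_finite: "simple_graph V E \<Longrightarrow> finite V"
  by (simp add: simple_graph_def)

lemma gdeg_minus_card_Int:
  "finite V \<Longrightarrow> gdeg V E v - card (nbrs V E v \<inter> X) = card (nbrs V E v - X)"
  unfolding gdeg_def nbrs_def by (subst card_Diff_subset_Int) auto

lemma off_before_Suc:
  assumes "finite V"
  shows "off_before V E k (Suc n) = off_before V E k n \<union>
    {v \<in> V - off_before V E k n. card (nbrs V E v - off_before V E k n) < k v}"
proof (cases n)
  case 0
  then show ?thesis by (auto simp: off_before.simps(2) gdeg_def)
next
  case (Suc m)
  then show ?thesis using gdeg_minus_card_Int[OF assms] by (auto simp: off_before.simps(2))
qed

lemma off_before_subset: "off_before V E k n \<subseteq> V"
  using off_subset by (cases n) (fastforce simp: off_before.simps(2))+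

lemma off_before_mono:
  assumes "finite V" and "m \<le> n"
  shows "off_before V E k m \<subseteq> off_before V E k n"
  using off_before_Suc[OF assms(1)] by (intro lift_Suc_mono_le[OF _ assms(2)]) blast

lemma off_before_stable:
  assumes "finite V" and "off_before V E k (Suc n) = off_before V E k n" and "n \<le> m"
  shows "off_before V E k m = off_before V E k n"
  using assms(3)
proof (induction m rule: dec_induct)
  case (step m)
  then show ?case using off_before_Suc[OF assms(1), of E k m] off_before_Suc[OF assms(1), of E k n]
      assms(2) by simp
qed simp

lemma off_before_changing:
  assumes "finite V" and "off_before V E k (Suc n) \<noteq> off_before V E k n" and "m \<le> n"
  shows "off_before V E k (Suc m) \<noteq> off_before V E k m"
proof
  assume "off_before V E k (Suc m) = off_before V E k m"
  then have "off_before V E k (Suc n) = off_before V E k m" "off_before V E k n = off_before V E k m"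
    using off_before_stable[OF assms(1), of E k m] assms(3) le_SucI by blast+
  with assms(2) show False by simp
qed

lemma card_off_before_ge:
  assumes "finite V" and "off_before V E k (Suc n) \<noteq> off_before V E k n"
  shows "n \<le> card (off_before V E k n)"
  using assms(2)
proof (induction n)
  case (Suc n)
  have changing: "off_before V E k (Suc n) \<noteq> off_before V E k n"
    using off_before_changing[OF assms(1) Suc.prems] by simp
  then have "n \<le> card (off_before V E k n)" by (rule Suc.IH)
  moreover have "off_before V E k n \<subseteq> off_before V E k (Suc n)"
    by (rule off_before_mono[OF assms(1)]) simp
  then have "off_before V E k n \<subset> off_before V E k (Suc n)"
    using changing by blast
  then have "card (off_before V E k n) < card (off_before V E k (Suc n))"
    by (rule psubset_card_mono[OF finite_subset[OF off_before_subset assms(1)]])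
  ultimately show ?case by linarith
qed simp_all

lemma converges_within_if_stable:
  assumes "finite V" and "off_before V E k (Suc (Suc T)) = off_before V E k (Suc T)"
  shows "converges_within V E k T"
  unfolding converges_within_def
proof (intro allI impI)
  fix t assume "T \<le> t"
  then show "off V E k t = off V E k T"
    using off_before_stable[OF assms, of "Suc t"] by (simp add: off_before.simps(2))
qed

lemma still_active:
  assumes "finite V" and "y \<in> V" and "y \<notin> off_before V E k (Suc n)"
  shows "k y \<le> card (nbrs V E y - off_before V E k n)"
proof -
  have "y \<notin> {v \<in> V - off_before V E k n. card (nbrs V E v - off_before V E k n) < k v}"
    and "y \<notin> off_before V E k n"
    using assms(3) unfolding off_before_Suc[OF assms(1)] by blast+
  with assms(2) show ?thesis by simp
qed

lemma just_removed:
  assumes "finite V" and "w \<in> off_before V E k (Suc n) - off_before V E k n"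
  shows "card (nbrs V E w - off_before V E k n) < k w"
proof -
  have "w \<in> {v \<in> V - off_before V E k n. card (nbrs V E v - off_before V E k n) < k v}"
    using assms(2) unfolding off_before_Suc[OF assms(1)] by blast
  then show ?thesis by simp
qed

lemma removed_has_removed_nbr:
  assumes "finite V"
    and v: "v \<in> off_before V E k (Suc (Suc n)) - off_before V E k (Suc n)"
  obtains u where "u \<in> nbrs V E v" "u \<in> off_before V E k (Suc n) - off_before V E k n"
proof -
  have "v \<in> V" using v off_before_subset[of V E k "Suc (Suc n)"] by blast
  then have "k v \<le> card (nbrs V E v - off_before V E k n)"
    using still_active[OF assms(1)] v by blast
  moreover have "card (nbrs V E v - off_before V E k (Suc n)) < k v"
    using just_removed[OF assms] .
  moreover have "finite (nbrs V E v)" using assms(1) by (simp add: nbrs_def)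
  ultimately have "\<not> nbrs V E v - off_before V E k n \<subseteq> nbrs V E v - off_before V E k (Suc n)"
    using card_mono[OF finite_Diff] by (metis leD order.trans)
  then show ?thesis using that by blast
qed

lemma active_threshold_le:
  assumes "finite V" and "finite A" and "y \<in> V" and "y \<notin> off_before V E k (Suc m)"
    and "nbrs V E y \<subseteq> A" and "X \<subseteq> off_before V E k m"
  shows "card (A \<inter> X) + k y \<le> card A"
proof -
  have "k y \<le> card (nbrs V E y - off_before V E k m)"
    using still_active[OF assms(1,3,4)] .
  also have "\<dots> \<le> card (A - X)"
    using assms(5,6) by (intro card_mono) (auto simp: assms(2))
  finally show ?thesis using card_Int_Diff[OF assms(2), of X] by linarith
qed

theorem converges_within_card_minus:
  assumes "simple_graph V E" and "\<forall>v\<in>V. m \<le> k v" and "m \<le> card V"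
  shows "converges_within V E k (card V - m)"
proof (rule converges_within_if_stable[OF simple_graph_finite[OF assms(1)]], rule ccontr)
  let ?O = "off_before V E k" and ?n = "card V - m"
  have fin: "finite V" using simple_graph_finite[OF assms(1)] .
  assume changing: "?O (Suc (Suc ?n)) \<noteq> ?O (Suc ?n)"
  moreover have "?O (Suc ?n) \<subseteq> ?O (Suc (Suc ?n))"
    by (rule off_before_mono[OF fin]) simp
  ultimately obtain v where v: "v \<in> ?O (Suc (Suc ?n)) - ?O (Suc ?n)"
    by blast
  have "v \<in> V" using v off_before_subset[of V E k "Suc (Suc ?n)"] by blast
  have "v \<notin> ?O ?n"
    using v off_before_mono[OF fin, of ?n "Suc ?n" E k] by auto
  have "card ((V - {v}) \<inter> ?O ?n) + k v \<le> card (V - {v})"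
  proof (rule active_threshold_le[OF fin])
    show "nbrs V E v \<subseteq> V - {v}"
      using assms(1) by (auto simp: nbrs_def simple_graph_def)
  qed (use v \<open>v \<in> V\<close> fin in auto)
  moreover have "(V - {v}) \<inter> ?O ?n = ?O ?n"
    using \<open>v \<notin> ?O ?n\<close> off_before_subset[of V E k ?n] by blast
  ultimately have "card (?O ?n) + k v \<le> card V - 1"
    using \<open>v \<in> V\<close> by simp
  moreover have "?n \<le> card (?O ?n)"
    using card_off_before_ge[OF fin off_before_changing[OF fin changing le_SucI[OF order.refl]]] .
  moreover have "0 < card V" using \<open>v \<in> V\<close> fin card_gt_0_iff by blast
  moreover have "m \<le> k v" using assms(2) \<open>v \<in> V\<close> by blast
  ultimately show False using assms(3) by linarith
qed

lemma active_nbrs_saturate: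
  assumes "finite V" and "y \<in> V" and "y \<notin> off_before V E k (Suc n)"
    and "nbrs V E y \<subseteq> A" and "finite A" and "card (A - off_before V E k n) \<le> k y"
  shows "A - off_before V E k n \<subseteq> nbrs V E y"
proof -
  have "nbrs V E y - off_before V E k n \<subseteq> A - off_before V E k n"
    using assms(4) by blast
  moreover have "card (A - off_before V E k n) \<le> card (nbrs V E y - off_before V E k n)"
    using still_active[OF assms(1-3)] assms(6) by linarith
  ultimately show ?thesis
    using card_seteq[OF finite_Diff[OF assms(5)]] by blast
qed

lemma bipartite_finite: "bipartite V E V1 V2 \<Longrightarrow> finite V"
  unfolding bipartite_def using simple_graph_finite by blast

lemma bipartite_swap: "bipartite V E V1 V2 \<Longrightarrow> bipartite V E V2 V1"
  unfolding bipartite_def by blast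

lemma bipartite_nbrs_subset:
  "bipartite V E V1 V2 \<Longrightarrow> v \<in> V1 \<Longrightarrow> nbrs V E v \<subseteq> V2"
  unfolding bipartite_def nbrs_def by blast

lemma bipartite_active_adjacent_to_removed:
  assumes bip: "bipartite V E V1 V2" and thr2: "\<forall>v\<in>V2. thr v = k2"
    and "w \<in> V1" and "w \<notin> off_before V E thr n"
    and "card (V1 - off_before V E thr n) \<le> k2"
  shows "V2 - off_before V E thr (Suc n) \<subseteq> nbrs V E w"
proof
  fix y assume y: "y \<in> V2 - off_before V E thr (Suc n)"
  have fin: "finite V" using bipartite_finite[OF bip] .
  have "y \<in> V" "finite V1" using y bip fin by (auto simp: bipartite_def)
  have "V1 - off_before V E thr n \<subseteq> nbrs V E y"
  proof (rule active_nbrs_saturate[OF fin \<open>y \<in> V\<close>])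
    show "nbrs V E y \<subseteq> V1"
      using bipartite_nbrs_subset[OF bipartite_swap[OF bip]] y by blast
    show "card (V1 - off_before V E thr n) \<le> thr y"
      using assms(5) thr2 y by simp
  qed (use y \<open>finite V1\<close> in auto)
  then have "E y w" using assms(3,4) by (auto simp: nbrs_def)
  then show "y \<in> nbrs V E w"
    using bip \<open>y \<in> V\<close> by (auto simp: nbrs_def bipartite_def simple_graph_def)
qed

lemma bipartite_removal_leaves_many_active:
  assumes bip: "bipartite V E V1 V2"
    and thr1: "\<forall>v\<in>V1. thr v = k1" and thr2: "\<forall>v\<in>V2. thr v = k2"
    and w: "w \<in> V1" "w \<in> off_before V E thr (Suc n) - off_before V E thr n"
    and v: "v \<in> V1" "v \<notin> off_before V E thr (Suc (Suc n))"
  shows "k2 < card (V1 - off_before V E thr n)"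
proof (rule ccontr)
  let ?O = "off_before V E thr" and ?N = "nbrs V E"
  assume "\<not> k2 < card (V1 - ?O n)"
  then have "V2 - ?O (Suc n) \<subseteq> ?N w"
    using w by (intro bipartite_active_adjacent_to_removed[OF bip thr2]) auto
  moreover have fin: "finite V" using bipartite_finite[OF bip] .
  then have "?O n \<subseteq> ?O (Suc n)" by (rule off_before_mono) simp
  ultimately have "?N v - ?O (Suc n) \<subseteq> ?N w - ?O n"
    using bipartite_nbrs_subset[OF bip \<open>v \<in> V1\<close>] by blast
  then have "card (?N v - ?O (Suc n)) \<le> card (?N w - ?O n)"
    using fin by (intro card_mono) (auto simp: nbrs_def)
  moreover have "v \<in> V" using v bip unfolding bipartite_def by blast
  then have "thr v \<le> card (?N v - ?O (Suc n))"
    using still_active[OF fin] v(2) by blast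
  ultimately show False
    using just_removed[OF fin w(2)] thr1 v(1) w(1) by simp
qed

lemma card_split_disjoint:
  assumes "finite A" and "A \<subseteq> B \<union> C" and "B \<inter> C = {}"
  shows "card A = card (B \<inter> A) + card (C \<inter> A)"
proof -
  have "A - B = C \<inter> A" using assms(2,3) by blast
  then show ?thesis using card_Int_Diff[OF assms(1), of B] by (simp add: Int_commute)
qed

lemma bipartite_late_removal_bound:
  assumes bip: "bipartite V E V1 V2"
    and thr1: "\<forall>v\<in>V1. thr v = k1" and thr2: "\<forall>v\<in>V2. thr v = k2" and "v \<in> V1"
    and v: "v \<in> off_before V E thr (Suc (Suc (Suc n))) - off_before V E thr (Suc (Suc n))"
  shows "Suc n \<le> (card V1 - k2) + (card V2 - k1)"
proof -
  let ?O = "off_before V E thr" and ?N = "nbrs V E"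
  have fin: "finite V" using bipartite_finite[OF bip] .
  have cover: "V1 \<union> V2 = V" and disj: "V1 \<inter> V2 = {}"
    using bip unfolding bipartite_def by blast+
  have fin12: "finite V1" "finite V2" using fin cover by auto
  have On_mono: "?O n \<subseteq> ?O (Suc n)" by (rule off_before_mono[OF fin]) simp
  obtain u where "u \<in> ?N v" and u: "u \<in> ?O (Suc (Suc n)) - ?O (Suc n)"
    using removed_has_removed_nbr[OF fin v] .
  then have "u \<in> V2" using bipartite_nbrs_subset[OF bip \<open>v \<in> V1\<close>] by blast
  have live1: "card (V1 \<inter> ?O n) + k2 \<le> card V1"
    using active_threshold_le[OF fin fin12(1), of u E thr n "?O n"] u \<open>u \<in> V2\<close> thr2 cover
      bipartite_nbrs_subset[OF bipartite_swap[OF bip] \<open>u \<in> V2\<close>] by auto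
  have live2: "card (V2 \<inter> X) + k1 \<le> card V2" if "X \<subseteq> ?O (Suc n)" for X
    using active_threshold_le[OF fin fin12(2), of v E thr "Suc n" X] v \<open>v \<in> V1\<close> thr1 cover
      bipartite_nbrs_subset[OF bip \<open>v \<in> V1\<close>] that by auto
  have "?O (Suc n) \<noteq> ?O n"
    using off_before_changing[OF fin, of E thr "Suc (Suc n)" n] v by auto
  then have removed_ge: "n \<le> card (?O n)" by (rule card_off_before_ge[OF fin])
  have removed_split: "card (?O n) = card (V1 \<inter> ?O n) + card (V2 \<inter> ?O n)"
    using finite_subset[OF off_before_subset fin] off_before_subset[of V E thr n] cover disj
    by (intro card_split_disjoint) auto
  obtain w where w: "w \<in> ?O (Suc n) - ?O n"
    using \<open>?O (Suc n) \<noteq> ?O n\<close> On_mono by blast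
  then consider "card (V1 \<inter> ?O n) + Suc k2 \<le> card V1" | "card (V2 \<inter> ?O n) + Suc k1 \<le> card V2"
  proof (cases "w \<in> V2")
    case True
    then have "V2 \<inter> insert w (?O n) = insert w (V2 \<inter> ?O n)" by blast
    then have "card (insert w (V2 \<inter> ?O n)) + k1 \<le> card V2"
      using live2[of "insert w (?O n)"] w On_mono by auto
    moreover have "card (insert w (V2 \<inter> ?O n)) = Suc (card (V2 \<inter> ?O n))"
      using w fin12(2) by simp
    ultimately show ?thesis by (intro that(2)) linarith
  next
    case False
    then have "w \<in> V1" using w off_before_subset[of V E thr "Suc n"] cover by blast
    moreover have "v \<notin> ?O (Suc (Suc n))" using v by blast
    ultimately have "k2 < card (V1 - ?O n)"
      by (rule bipartite_removal_leaves_many_active[OF bip thr1 thr2 _ w \<open>v \<in> V1\<close>])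
    then show ?thesis using card_Int_Diff[OF fin12(1), of "?O n"] by (intro that(1)) linarith
  qed
  then show ?thesis using removed_ge removed_split live1 live2[OF On_mono] by cases linarith+
qed

theorem bipartite_converges_within:
  assumes bip: "bipartite V E V1 V2"
    and thr1: "\<forall>v\<in>V1. thr v = k1" and thr2: "\<forall>v\<in>V2. thr v = k2"
  shows "converges_within V E thr ((card V1 - k2) + (card V2 - k1) + 1)"
proof -
  let ?O = "off_before V E thr" and ?n = "(card V1 - k2) + (card V2 - k1)"
  have fin: "finite V" using bipartite_finite[OF bip] .
  have "?O (Suc (Suc (Suc ?n))) = ?O (Suc (Suc ?n))"
  proof (rule ccontr)
    assume "?O (Suc (Suc (Suc ?n))) \<noteq> ?O (Suc (Suc ?n))"
    moreover have "?O (Suc (Suc ?n)) \<subseteq> ?O (Suc (Suc (Suc ?n)))"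
      by (rule off_before_mono[OF fin]) simp
    ultimately obtain v where v: "v \<in> ?O (Suc (Suc (Suc ?n))) - ?O (Suc (Suc ?n))"
      by blast
    have "v \<in> V1 \<union> V2"
      using v off_before_subset[of V E thr "Suc (Suc (Suc ?n))"] bip
      unfolding bipartite_def by blast
    then have "Suc ?n \<le> ?n"
      using bipartite_late_removal_bound[OF bip thr1 thr2 _ v]
        bipartite_late_removal_bound[OF bipartite_swap[OF bip] thr2 thr1 _ v]
      by (auto simp: add.commute)
    then show False by simp
  qed
  then show ?thesis using converges_within_if_stable[OF fin] by simp
qed

lemma p_partite_card_sum:
  assumes "p_partite V E p P"
  shows "(\<Sum>i\<in>{1..p}. card (P i)) = card V"
proof -
  have fin: "finite V" and cover: "(\<Union>i\<in>{1..p}. P i) = V"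
    and disj: "\<forall>i\<in>{1..p}. \<forall>j\<in>{1..p}. i \<noteq> j \<longrightarrow> P i \<inter> P j = {}"
    using assms simple_graph_finite unfolding p_partite_def by blast+
  have "\<forall>i\<in>{1..p}. finite (P i)" using fin cover by (metis UN_subset_iff finite_subset order.refl)
  then have "card (\<Union>i\<in>{1..p}. P i) = (\<Sum>i\<in>{1..p}. card (P i))"
    using disj by (intro card_UN_disjoint) auto
  then show ?thesis using cover by simp
qed

theorem p_partite_converges_within:
  assumes "1 \<le> p" and pp: "p_partite V E p P" and ks: "\<forall>i\<in>{1..p}. ks i \<le> card (P i)"
    and thr: "\<forall>i\<in>{1..p}. \<forall>v\<in>P i. thr v = ks i"
  shows "converges_within V E thr ((\<Sum>i\<in>{1..p}. card (P i)) - Min (ks ` {1..p}))"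
proof -
  have graph: "simple_graph V E" and cover: "(\<Union>i\<in>{1..p}. P i) = V"
    using pp unfolding p_partite_def by blast+
  have thr_ge: "\<forall>v\<in>V. Min (ks ` {1..p}) \<le> thr v"
  proof
    fix v assume "v \<in> V"
    then obtain i where "i \<in> {1..p}" "v \<in> P i" using cover by blast
    then show "Min (ks ` {1..p}) \<le> thr v" using thr by simp
  qed
  have "1 \<in> {1..p}" using assms(1) by simp
  then have "Min (ks ` {1..p}) \<le> ks 1" by simp
  also have "\<dots> \<le> card (P 1)" using ks \<open>1 \<in> {1..p}\<close> by blast
  also have "\<dots> \<le> card V"
    using cover \<open>1 \<in> {1..p}\<close> simple_graph_finite[OF graph] by (intro card_mono) auto
  finally show ?thesis
    using converges_within_card_minus[OF graph thr_ge] p_partite_card_sum[OF pp] by simp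
qed

theorem lemma2:
  shows "(\<forall>(V::'a set) E (k::nat). simple_graph V E \<and> k \<le> card V
            \<longrightarrow> converges_within V E (\<lambda>_. k) (card V - k))
       \<and> (\<forall>(V::'a set) E V1 V2 (k1::nat) k2 thr. bipartite V E V1 V2
            \<and> (\<forall>v\<in>V1. thr v = k1) \<and> (\<forall>v\<in>V2. thr v = k2)
            \<longrightarrow> converges_within V E thr ((card V1 - k2) + (card V2 - k1) + 1))
       \<and> (\<forall>(V::'a set) E (p::nat) P (ks::nat \<Rightarrow> nat) thr. 1 \<le> p \<and> p_partite V E p P
            \<and> (\<forall>i\<in>{1..p}. ks i \<le> card (P i))
            \<and> (\<forall>i\<in>{1..p}. \<forall>v\<in>P i. thr v = ks i)
            \<longrightarrow> converges_within V E thr ((\<Sum>i\<in>{1..p}. card (P i)) - Min (ks ` {1..p})))"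
  using converges_within_card_minus[where k = "\<lambda>_. _"] bipartite_converges_within
    p_partite_converges_within
  by blast

end
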